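(* Let $n\geq7$ and let $u,u',v,v'$ be monomials such that $x_{n-1}u,x_{n-1}u'\in\mathcal A$ and $x_nv,x_nv'\in\mathcal C$. If $uv>_{\mathcal R}u'v'$ in $F(J(P_{n-2})^2)$, then $x_{n-1}x_nuv>_{\mathcal R}x_{n-1}x_nu'v'$ in $F(J(P_n)^2)$.
   Context: For $m\geq 1$, $P_m$ is the path graph on vertices $x_1,\ldots,x_m$ with edges $\{x_i,x_{i+1}\}$; $J(P_m)$ is its cover ideal (generated by $\prod_{x\in C}x$, $C$ a minimal vertex cover); $G(I)$ denotes minimal monomial generators and $F(I^2)=\{ab:a,b\in G(I)\}$. The rooted list $\mathcal R(P_m)$: $\mathcal R(P_1)$ empty; $\mathcal R(P_2)=x_1,x_2$; $\mathcal R(P_3)=x_2,x_1x_3$; $\mathcal R(P_4)=x_1x_3,x_2x_3,x_2x_4$; for $m\geq5$, if $\mathcal R(P_{m-2})=u_1,\ldots,u_r$ and $\mathcal R(P_{m-3})=v_1,\ldots,v_s$, then $\mathcal R(P_m)=x_{m-1}u_1,\ldots,x_{m-1}u_r,x_mx_{m-2}v_1,\ldots,x_mx_{m-2}v_s$; it lists each element of $G(J(P_m))$ once. With $\mathcal R(P_m)=u_1,\ldots,u_q$, each $M\in F(J(P_m)^2)$ is $u_1^{a_1}\cdots u_q^{a_q}$ with $a_i\geq0$, $\sum a_i=2$; its maximal expression is the one with lexicographically largest exponent vector, and $M>_{\mathcal R}N$ on $F(J(P_m)^2)$ iff the maximal-expression exponent vector of $M$ is lexicographically larger than that of $N$. For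 $n\geq7$: $\mathcal A$ is the sublist of $\mathcal R(P_n)$ of elements divisible by $x_{n-1}x_{n-3}$ (equivalently $x_{n-1}x_{n-3}w$, $w\in\mathcal R(P_{n-4})$), and $\mathcal C$ is the sublist of elements divisible by $x_nx_{n-4}$ (equivalently $x_nx_{n-2}x_{n-4}w$, $w\in\mathcal R(P_{n-5})$). *)

theory Defs
  imports Main "HOL-Library.Multiset"
begin

text \<open>Monomials in the variables x_1, x_2, ... are represented as finite multisets
  of variable indices: the monomial x_1^2 x_3 is {#1,1,3#}; the product of monomials
  is multiset sum and divisibility is sub-multiset inclusion.\<close>

type_synonym monomial = "nat multiset"

text \<open>The rooted list R(P_m) of minimal generators of the cover ideal J(P_m).\<close>
fun rooted :: "nat \<Rightarrow> monomial list" where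
  "rooted 0 = []"
| "rooted (Suc 0) = []"
| "rooted (Suc (Suc 0)) = [{#1#}, {#2#}]"
| "rooted (Suc (Suc (Suc 0))) = [{#2#}, {#1, 3#}]"
| "rooted (Suc (Suc (Suc (Suc 0)))) = [{#1, 3#}, {#2, 3#}, {#2, 4#}]"
| "rooted (Suc (Suc (Suc (Suc (Suc k))))) =
     (let m = k + 5 in
        map (\<lambda>u. add_mset (m - 1) u) (rooted (m - 2))
        @ map (\<lambda>v. add_mset m (add_mset (m - 2) v)) (rooted (m - 3)))"

definition F2 :: "nat \<Rightarrow> monomial set" where
  "F2 m = {a + b | a b. a \<in> set (rooted m) \<and> b \<in> set (rooted m)}"

definition eval_exp :: "monomial list \<Rightarrow> nat list \<Rightarrow> monomial" where
  "eval_exp R a = sum_list (map2 (\<lambda>k u. repeat_mset k u) a R)"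

definition expressions :: "monomial list \<Rightarrow> monomial \<Rightarrow> nat list set" where
  "expressions R M = {a. length a = length R \<and> sum_list a = 2 \<and> eval_exp R a = M}"

definition max_expression :: "monomial list \<Rightarrow> monomial \<Rightarrow> nat list" where
  "max_expression R M =
     (THE a. a \<in> expressions R M \<and> (\<forall>b \<in> expressions R M. b = a \<or> ord_class.lexordp b a))"

definition R_greater :: "nat \<Rightarrow> monomial \<Rightarrow> monomial \<Rightarrow> bool" where
  "R_greater m M N \<longleftrightarrow> M \<in> F2 m \<and> N \<in> F2 m \<and>
     ord_class.lexordp (max_expression (rooted m) N) (max_expression (rooted m) M)"

definition A_list :: "nat \<Rightarrow> monomial list" where
  "A_list n = filter (\<lambda>w. {#n - 1, n - 3#} \<subseteq># w) (rooted n)"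

definition C_list :: "nat \<Rightarrow> monomial list" where
  "C_list n = filter (\<lambda>w. {#n, n - 4#} \<subseteq># w) (rooted n)"

end

theory Submission
  imports Defs "HOL-Library.Product_Lexorder"
begin

text \<open>
  An expression u_i u_j (i \<le> j) of M \<in> F(J(P_m)^2) has exponent vector e_i + e_j, and
  e_i + e_j is lexicographically larger than e_i' + e_j' exactly when (i, j) < (i', j')
  lexicographically. Hence the maximal expression of M belongs to the least index pair (i, j)
  with u_i u_j = M, and >_R compares these least pairs.

  Write R(P_{n-2}) = A' @ B' with A' = x_{n-3} R(P_{n-4}) and B' = x_{n-2} x_{n-4} R(P_{n-5}).
  Then R(P_n) = x_{n-1} (A' @ B') @ x_n (B' @ C') for some list C' whose entries contain both
  x_{n-2} and x_{n-3}. If u \<in> A' and v \<in> B', then x_{n-1}, x_{n-2} and x_{n-3} each occur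
  exactly once in uv. Counting these variables shows that every factorization of x_{n-1} x_n uv
  in R(P_n) multiplies an entry of x_{n-1} A' by an entry of x_n B', just as every factorization
  of uv in R(P_{n-2}) multiplies an entry of A' by one of B'. So the index pairs correspond via
  (i, j) \<mapsto> (i, j + |R(P_{n-5})|), and this map preserves the lexicographic order.
\<close>

definition factor_pairs :: "'a::plus list \<Rightarrow> 'a \<Rightarrow> (nat \<times> nat) set" where
  "factor_pairs R M = {(i, j). i \<le> j \<and> j < length R \<and> R ! i + R ! j = M}"

definition pair_exponent :: "nat \<Rightarrow> nat \<times> nat \<Rightarrow> nat list" where
  "pair_exponent q p = map (\<lambda>k. of_bool (k = fst p) + of_bool (k = snd p)) [0..<q]"

lemma length_pair_exponent [simp]: "length (pair_exponent q p) = q"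
  by (simp add: pair_exponent_def)

lemma nth_pair_exponent [simp]:
  "k < q \<Longrightarrow> pair_exponent q p ! k = of_bool (k = fst p) + of_bool (k = snd p)"
  by (simp add: pair_exponent_def)

lemma pair_exponent_Suc_Suc:
  "pair_exponent (Suc q) (Suc i, Suc j) = 0 # pair_exponent q (i, j)"
  unfolding pair_exponent_def map_upt_Suc by simp

lemma finite_factor_pairs: "finite (factor_pairs R M)"
  by (rule finite_subset[of _ "{..<length R} \<times> {..<length R}"]) (auto simp: factor_pairs_def)

lemma factor_pairs_nonempty:
  fixes a b :: "'a::ab_semigroup_add"
  assumes "a \<in> set R" "b \<in> set R"
  shows "factor_pairs R (a + b) \<noteq> {}"
proof -
  obtain i j where "i < length R" "j < length R" "R ! i = a" "R ! j = b"
    using assms by (auto simp: in_set_conv_nth)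
  then have "(min i j, max i j) \<in> factor_pairs R (a + b)"
    by (cases "i \<le> j") (auto simp: factor_pairs_def add.commute)
  then show ?thesis by blast
qed

lemma sum_list_eq_1:
  "sum_list (xs :: nat list) = 1 \<Longrightarrow> \<exists>j<length xs. \<forall>k<length xs. xs ! k = of_bool (k = j)"
proof (induction xs)
  case (Cons x xs)
  show ?case
  proof (cases x)
    case 0
    with Cons obtain j where "j < length xs" "\<forall>k<length xs. xs ! k = of_bool (k = j)" by auto
    with 0 show ?thesis by (intro exI[of _ "Suc j"]) (auto simp: nth_Cons split: nat.splits)
  next
    case (Suc y)
    with Cons.prems have "x = 1" "sum_list xs = 0" by auto
    then show ?thesis by (intro exI[of _ 0]) (auto simp: nth_Cons sum_list_eq_0_iff split: nat.splits)
  qed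
qed simp

lemma sum_list_eq_2:
  "sum_list (xs :: nat list) = 2 \<Longrightarrow>
     \<exists>p. fst p \<le> snd p \<and> snd p < length xs \<and> xs = pair_exponent (length xs) p"
proof (induction xs)
  case (Cons x xs)
  have "x \<le> 2" using Cons.prems by simp
  then consider "x = 0" | "x = 1" | "x = 2" by linarith
  then show ?case
  proof cases
    case 1
    with Cons obtain p where p: "fst p \<le> snd p" "snd p < length xs" "xs = pair_exponent (length xs) p"
      by auto
    have "x # xs = pair_exponent (length (x # xs)) (Suc (fst p), Suc (snd p))"
      by (simp add: 1 pair_exponent_Suc_Suc flip: p(3))
    with p show ?thesis by (intro exI[of _ "(Suc (fst p), Suc (snd p))"]) simp
  next
    case 2
    with Cons.prems obtain j where j: "j < length xs" "\<forall>k<length xs. xs ! k = of_bool (k = j)"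
      using sum_list_eq_1 by auto
    have "x # xs = pair_exponent (length (x # xs)) (0, Suc j)"
      by (rule nth_equalityI) (use 2 j in \<open>auto simp: nth_Cons split: nat.splits\<close>)
    with j show ?thesis by (intro exI[of _ "(0, Suc j)"]) simp
  next
    case 3
    with Cons.prems have "sum_list xs = 0" by simp
    then have "x # xs = pair_exponent (length (x # xs)) (0, 0)"
      by (intro nth_equalityI) (use 3 in \<open>auto simp: nth_Cons sum_list_eq_0_iff split: nat.splits\<close>)
    then show ?thesis by (intro exI[of _ "(0, 0)"]) simp
  qed
qed simp

lemma sum_list_pair_exponent:
  assumes "fst p < q" "snd p < q"
  shows "sum_list (pair_exponent q p) = 2"
  using assms by (simp add: pair_exponent_def sum_list_sum_nth lessThan_atLeast0 sum.distrib)

lemma eval_exp_pair_exponent: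
  assumes "fst p < length R" "snd p < length R"
  shows "eval_exp R (pair_exponent (length R) p) = R ! fst p + R ! snd p"
proof -
  have "eval_exp R (pair_exponent (length R) p) =
        (\<Sum>k<length R. repeat_mset (of_bool (k = fst p) + of_bool (k = snd p)) (R ! k))"
    by (simp add: eval_exp_def sum_list_sum_nth lessThan_atLeast0)
  also have "\<dots> = (\<Sum>k<length R. (if k = fst p then R ! k else {#}) + (if k = snd p then R ! k else {#}))"
    by (intro sum.cong) (auto simp: repeat_mset_distrib)
  also have "\<dots> = (\<Sum>k<length R. (if k = fst p then R ! k else {#}))
                  + (\<Sum>k<length R. (if k = snd p then R ! k else {#}))"
    by (rule sum.distrib)
  also have "\<dots> = R ! fst p + R ! snd p"
    using assms by (simp add: sum.delta)
  finally show ?thesis .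
qed

lemma expressions_eq_image_factor_pairs:
  "expressions R M = pair_exponent (length R) ` factor_pairs R M"
proof (intro equalityI subsetI)
  fix a assume a: "a \<in> expressions R M"
  then obtain p where p: "fst p \<le> snd p" "snd p < length R" "a = pair_exponent (length R) p"
    using sum_list_eq_2[of a] by (auto simp: expressions_def)
  with a have "p \<in> factor_pairs R M"
    by (auto simp: expressions_def factor_pairs_def eval_exp_pair_exponent)
  with p show "a \<in> pair_exponent (length R) ` factor_pairs R M" by blast
next
  fix a assume "a \<in> pair_exponent (length R) ` factor_pairs R M"
  then show "a \<in> expressions R M"
    by (auto simp: expressions_def factor_pairs_def sum_list_pair_exponent eval_exp_pair_exponent)
qed

lemma lexordp_nthI:
  fixes xs ys :: "'a::order list"
  assumes "length xs = length ys" "t < length xs" "\<forall>k<t. xs ! k = ys ! k" "xs ! t < ys ! t"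
  shows "ord_class.lexordp xs ys"
proof -
  have "take t xs = take t ys"
    using assms by (intro nth_equalityI) auto
  moreover have "xs = take t xs @ xs ! t # drop (Suc t) xs" "ys = take t ys @ ys ! t # drop (Suc t) ys"
    using assms by (auto simp: id_take_nth_drop)
  ultimately show ?thesis
    using assms(4) lexordp_append_left_rightI by metis
qed

lemma lexordp_pair_exponent:
  assumes "fst p \<le> snd p" "snd p < q" "fst p' \<le> snd p'" "snd p' < q" "p' < p"
  shows "ord_class.lexordp (pair_exponent q p) (pair_exponent q p')"
proof (cases "fst p' < fst p")
  case True
  show ?thesis
    by (rule lexordp_nthI[where t = "fst p'"]) (use assms True in auto)
next
  case False
  with assms(5) have "fst p' = fst p" "snd p' < snd p"
    by (auto simp: less_prod_def)
  then show ?thesis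
    by (intro lexordp_nthI[where t = "snd p'"]) (use assms in auto)
qed

lemma lexordp_pair_exponent_iff:
  assumes "fst p \<le> snd p" "snd p < q" "fst p' \<le> snd p'" "snd p' < q"
  shows "ord_class.lexordp (pair_exponent q p) (pair_exponent q p') \<longleftrightarrow> p' < p"
proof
  assume lex: "ord_class.lexordp (pair_exponent q p) (pair_exponent q p')"
  show "p' < p"
  proof (rule ccontr)
    assume "\<not> p' < p"
    then consider "p = p'" | "p < p'" by fastforce
    then show False
      using lex lexordp_pair_exponent[OF assms(3,4,1,2)] lexordp_irreflexive' lexordp_antisym
      by metis
  qed
qed (rule lexordp_pair_exponent[OF assms])

lemma max_expression_eq:
  assumes "factor_pairs R M \<noteq> {}"
  shows "max_expression R M = pair_exponent (length R) (Min (factor_pairs R M))"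
proof -
  define P where "P = factor_pairs R M"
  define m where "m = Min P"
  have valid: "fst p \<le> snd p" "snd p < length R" if "p \<in> P" for p
    using that by (auto simp: P_def factor_pairs_def)
  have "finite P" "P \<noteq> {}"
    using assms finite_factor_pairs by (auto simp: P_def)
  then have m: "m \<in> P" "\<And>p. p \<in> P \<Longrightarrow> m \<le> p"
    by (auto simp: m_def)
  have greatest: "b = pair_exponent (length R) m \<or> ord_class.lexordp b (pair_exponent (length R) m)"
    if b: "b \<in> pair_exponent (length R) ` P" for b
  proof -
    obtain p where p: "p \<in> P" "b = pair_exponent (length R) p"
      using b by blast
    show ?thesis
    proof (cases "p = m")
      case False
      with m(2)[OF p(1)] have "m < p" by simp
      with p valid[OF p(1)] valid[OF m(1)] show ?thesis
        using lexordp_pair_exponent by blast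
    qed (use p in simp)
  qed
  show ?thesis
    unfolding max_expression_def expressions_eq_image_factor_pairs P_def[symmetric] m_def[symmetric]
  proof (rule the_equality)
    fix a
    assume a: "a \<in> pair_exponent (length R) ` P \<and>
      (\<forall>b \<in> pair_exponent (length R) ` P. b = a \<or> ord_class.lexordp b a)"
    show "a = pair_exponent (length R) m"
    proof (rule ccontr)
      assume ne: "a \<noteq> pair_exponent (length R) m"
      with a m(1) have "ord_class.lexordp (pair_exponent (length R) m) a"
        by auto
      moreover from ne a greatest have "ord_class.lexordp a (pair_exponent (length R) m)"
        by auto
      ultimately show False
        by (rule lexordp_antisym)
    qed
  next
    show "pair_exponent (length R) m \<in> pair_exponent (length R) ` P \<and>
      (\<forall>b \<in> pair_exponent (length R) ` P. b = pair_exponent (length R) m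
          \<or> ord_class.lexordp b (pair_exponent (length R) m))"
      using m(1) greatest by blast
  qed
qed

lemma R_greater_iff_Min_factor_pairs:
  "R_greater m M N \<longleftrightarrow>
     M \<in> F2 m \<and> N \<in> F2 m \<and> Min (factor_pairs (rooted m) M) < Min (factor_pairs (rooted m) N)"
proof (cases "M \<in> F2 m \<and> N \<in> F2 m")
  case True
  define pM where "pM = Min (factor_pairs (rooted m) M)"
  define pN where "pN = Min (factor_pairs (rooted m) N)"
  have nonempty: "factor_pairs (rooted m) M \<noteq> {}" "factor_pairs (rooted m) N \<noteq> {}"
    using True by (auto simp: F2_def factor_pairs_nonempty)
  then have "pM \<in> factor_pairs (rooted m) M" "pN \<in> factor_pairs (rooted m) N"
    using finite_factor_pairs by (auto simp: pM_def pN_def intro: Min_in)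
  then have "ord_class.lexordp (pair_exponent (length (rooted m)) pN)
               (pair_exponent (length (rooted m)) pM) \<longleftrightarrow> pM < pN"
    by (intro lexordp_pair_exponent_iff) (auto simp: factor_pairs_def)
  with True nonempty show ?thesis
    by (simp add: R_greater_def max_expression_eq pM_def pN_def)
qed (auto simp: R_greater_def)

definition cross_pairs :: "'a::plus list \<Rightarrow> 'a list \<Rightarrow> 'a \<Rightarrow> (nat \<times> nat) set" where
  "cross_pairs xs ys M = {(i, k). i < length xs \<and> k < length ys \<and> xs ! i + ys ! k = M}"

lemma factor_pairs_append:
  assumes "\<forall>x\<in>set xs. \<forall>x'\<in>set xs. x + x' \<noteq> M"
    and "\<forall>y\<in>set ys. \<forall>y'\<in>set ys. y + y' \<noteq> M"
  shows "factor_pairs (xs @ ys) M = (\<lambda>(i, k). (i, length xs + k)) ` cross_pairs xs ys M"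
proof (intro equalityI subsetI)
  fix p assume "p \<in> factor_pairs (xs @ ys) M"
  then obtain i j where ij: "p = (i, j)" "i \<le> j" "j < length (xs @ ys)"
    "(xs @ ys) ! i + (xs @ ys) ! j = M"
    by (auto simp: factor_pairs_def)
  have i: "i < length xs"
  proof (rule ccontr)
    assume "\<not> i < length xs"
    with ij have "ys ! (i - length xs) \<in> set ys" "ys ! (j - length xs) \<in> set ys"
      "ys ! (i - length xs) + ys ! (j - length xs) = M"
      by (auto simp: nth_append)
    with assms(2) show False by blast
  qed
  have j: "length xs \<le> j"
  proof (rule ccontr)
    assume "\<not> length xs \<le> j"
    with ij i have "xs ! i \<in> set xs" "xs ! j \<in> set xs" "xs ! i + xs ! j = M"
      by (auto simp: nth_append)
    with assms(1) show False by blast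
  qed
  from ij i j have "(i, j - length xs) \<in> cross_pairs xs ys M"
    by (auto simp: cross_pairs_def nth_append)
  with ij j show "p \<in> (\<lambda>(i, k). (i, length xs + k)) ` cross_pairs xs ys M"
    by (auto intro!: image_eqI[where x = "(i, j - length xs)"])
qed (auto simp: factor_pairs_def cross_pairs_def nth_append)

lemma cross_pairs_append:
  assumes "\<forall>x\<in>set xs'. \<forall>y\<in>set (ys @ ys'). x + y \<noteq> M"
    and "\<forall>x\<in>set xs. \<forall>y\<in>set ys'. x + y \<noteq> M"
  shows "cross_pairs (xs @ xs') (ys @ ys') M = cross_pairs xs ys M"
proof (intro equalityI subsetI)
  fix p assume "p \<in> cross_pairs (xs @ xs') (ys @ ys') M"
  then obtain i k where ik: "p = (i, k)" "i < length (xs @ xs')" "k < length (ys @ ys')"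
    "(xs @ xs') ! i + (ys @ ys') ! k = M"
    by (auto simp: cross_pairs_def)
  have i: "i < length xs"
  proof (rule ccontr)
    assume "\<not> i < length xs"
    with ik have "xs' ! (i - length xs) \<in> set xs'" "(ys @ ys') ! k \<in> set (ys @ ys')"
      "xs' ! (i - length xs) + (ys @ ys') ! k = M"
      by (auto simp: nth_append simp del: append_assoc)
    with assms(1) show False by blast
  qed
  have k: "k < length ys"
  proof (rule ccontr)
    assume "\<not> k < length ys"
    with ik i have "xs ! i \<in> set xs" "ys' ! (k - length ys) \<in> set ys'"
      "xs ! i + ys' ! (k - length ys) = M"
      by (auto simp: nth_append)
    with assms(2) show False by blast
  qed
  from ik i k show "p \<in> cross_pairs xs ys M"
    by (auto simp: cross_pairs_def nth_append)
qed (auto simp: cross_pairs_def nth_append)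

lemma cross_pairs_map_add_mset:
  "cross_pairs (map (add_mset a) xs) (map (add_mset b) ys) (add_mset a (add_mset b M)) =
     cross_pairs xs ys M"
  by (auto simp: cross_pairs_def)

lemma rooted_rec:
  "rooted (m + 5) = map (add_mset (m + 4)) (rooted (m + 3))
                    @ map (\<lambda>v. add_mset (m + 5) (add_mset (m + 3) v)) (rooted (m + 2))"
  by (simp add: Let_def numeral_eq_Suc)

lemma rooted_rec_7:
  "rooted (k + 7) = map (add_mset (k + 6)) (rooted (k + 5))
                    @ map (\<lambda>v. add_mset (k + 7) (add_mset (k + 5) v)) (rooted (k + 4))"
proof -
  have "k + 2 + 5 = k + 7" "k + 2 + 4 = k + 6" "k + 2 + 3 = k + 5" "k + 2 + 2 = k + 4"
    by simp_all
  then show ?thesis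
    using rooted_rec[of "k + 2"] by (simp only:)
qed

lemma var_le_of_mem_rooted:
  "w \<in> set (rooted m) \<Longrightarrow> x \<in># w \<Longrightarrow> x \<le> m"
proof (induction m arbitrary: w rule: less_induct)
  case (less m)
  show ?case
  proof (cases "5 \<le> m")
    case True
    define j where "j = m - 5"
    with True have m: "m = j + 5" by simp
    with less.prems(1) consider
        u where "u \<in> set (rooted (j + 3))" "w = add_mset (j + 4) u"
      | u where "u \<in> set (rooted (j + 2))" "w = add_mset (j + 5) (add_mset (j + 3) u)"
      by (auto simp: rooted_rec)
    then show ?thesis
    proof cases
      case 1
      with less.IH[of "j + 3" u] less.prems(2) m show ?thesis by auto
    next
      case 2
      with less.IH[of "j + 2" u] less.prems(2) m show ?thesis by auto
    qed
  next
    case False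
    then consider "m = 0" | "m = 1" | "m = 2" | "m = 3" | "m = 4" by linarith
    then show ?thesis
      using less.prems by cases (auto simp: numeral_eq_Suc)
  qed
qed

lemma rooted_split:
  obtains T where "rooted (m + 4) = map (add_mset (m + 3)) (rooted (m + 2)) @ T"
    and "\<forall>t\<in>set T. m + 4 \<in># t \<and> m + 3 \<notin># t"
proof (cases m)
  case 0
  then show ?thesis
    by (intro that[of "[{#2, 4#}]"]) (simp_all add: numeral_eq_Suc)
next
  case (Suc j)
  then have m: "m + 4 = j + 5" "m + 3 = j + 4" "m + 2 = j + 3" by simp_all
  let ?T = "map (\<lambda>v. add_mset (j + 5) (add_mset (j + 3) v)) (rooted (j + 2))"
  have "rooted (m + 4) = map (add_mset (m + 3)) (rooted (m + 2)) @ ?T"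
    unfolding m by (rule rooted_rec)
  moreover have "\<forall>t\<in>set ?T. m + 4 \<in># t \<and> m + 3 \<notin># t"
    unfolding m using var_le_of_mem_rooted[of _ "j + 2" "j + 4"] by fastforce
  ultimately show ?thesis
    by (rule that)
qed

lemma A_list_memD:
  assumes "7 \<le> n" and A: "add_mset (n - 1) u \<in> set (A_list n)"
  shows "u \<in> set (map (add_mset (n - 3)) (rooted (n - 4)))"
proof -
  define k where "k = n - 7"
  with assms(1) have n: "n = k + 7" and e: "n - 1 = k + 6" "n - 3 = k + 4" "n - 4 = k + 3"
    by simp_all
  from A have "add_mset (n - 1) u \<in> set (rooted n)" and "n - 3 \<in># add_mset (n - 1) u"
    by (auto simp: A_list_def dest: mset_subset_eqD)
  then have mem: "add_mset (k + 6) u \<in> set (rooted (k + 7))" and u4: "k + 4 \<in># u"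
    unfolding e unfolding n by simp_all
  have "u \<in> set (rooted (k + 5))"
  proof (rule ccontr)
    assume "u \<notin> set (rooted (k + 5))"
    with mem obtain b where b: "b \<in> set (rooted (k + 4))"
      and eq: "add_mset (k + 6) u = add_mset (k + 7) (add_mset (k + 5) b)"
      using rooted_rec_7 by auto
    have "k + 6 \<in># add_mset (k + 7) (add_mset (k + 5) b)"
      unfolding eq[symmetric] by simp
    then show False
      using var_le_of_mem_rooted[OF b, of "k + 6"] by auto
  qed
  then consider "u \<in> set (map (add_mset (k + 4)) (rooted (k + 3)))"
    | w where "w \<in> set (rooted (k + 2))" "u = add_mset (k + 5) (add_mset (k + 3) w)"
    using rooted_rec[of k] by auto
  then show ?thesis
  proof cases
    case 2
    with u4 have "k + 4 \<in># w" by simp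
    then show ?thesis
      using var_le_of_mem_rooted[OF 2(1)] by fastforce
  qed (simp add: e)
qed

lemma C_list_memD:
  assumes "7 \<le> n" and C: "add_mset n v \<in> set (C_list n)"
  shows "v \<in> set (map (\<lambda>w. add_mset (n - 2) (add_mset (n - 4) w)) (rooted (n - 5)))"
proof -
  define k where "k = n - 7"
  with assms(1) have n: "n = k + 7" and e: "n - 2 = k + 5" "n - 4 = k + 3" "n - 5 = k + 2"
    by simp_all
  from C have "add_mset n v \<in> set (rooted n)" and "n - 4 \<in># add_mset n v"
    by (auto simp: C_list_def dest: mset_subset_eqD)
  then have mem: "add_mset (k + 7) v \<in> set (rooted (k + 7))" and v3: "k + 3 \<in># v"
    unfolding e unfolding n by simp_all
  obtain b where b: "b \<in> set (rooted (k + 4))" "v = add_mset (k + 5) b"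
  proof -
    from mem consider
        a where "a \<in> set (rooted (k + 5))" "add_mset (k + 7) v = add_mset (k + 6) a"
      | b where "b \<in> set (rooted (k + 4))" "v = add_mset (k + 5) b"
      using rooted_rec_7 by auto
    then show thesis
    proof cases
      case 1
      then have "k + 7 \<in># add_mset (k + 6) a"
        by (metis union_single_eq_member)
      with 1 show ?thesis
        using var_le_of_mem_rooted[of a "k + 5" "k + 7"] by auto
    qed (rule that)
  qed
  obtain T where "rooted (k + 4) = map (add_mset (k + 3)) (rooted (k + 2)) @ T"
    and "\<forall>t\<in>set T. k + 4 \<in># t \<and> k + 3 \<notin># t"
    by (rule rooted_split)
  with b v3 show ?thesis by (auto simp: e)
qed

lemma factor_pairs_rooted_lift:
  assumes "7 \<le> n"
    and u: "u \<in> set (map (add_mset (n - 3)) (rooted (n - 4)))"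
    and v: "v \<in> set (map (\<lambda>w. add_mset (n - 2) (add_mset (n - 4) w)) (rooted (n - 5)))"
  shows "factor_pairs (rooted n) (add_mset (n - 1) (add_mset n (u + v))) =
    (\<lambda>(i, j). (i, j + length (rooted (n - 5)))) ` factor_pairs (rooted (n - 2)) (u + v)"
proof -
  define k where "k = n - 7"
  with assms(1) have n: "n = k + 7"
    and e: "n - 1 = k + 6" "n - 2 = k + 5" "n - 3 = k + 4" "n - 4 = k + 3" "n - 5 = k + 2"
    by simp_all
  define A where "A = map (add_mset (k + 4)) (rooted (k + 3))"
  define B where "B = map (\<lambda>w. add_mset (k + 5) (add_mset (k + 3) w)) (rooted (k + 2))"
  obtain T where T: "rooted (k + 4) = map (add_mset (k + 3)) (rooted (k + 2)) @ T"
    and T4: "\<forall>t\<in>set T. k + 4 \<in># t \<and> k + 3 \<notin># t"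
    by (rule rooted_split)
  define C where "C = map (add_mset (k + 5)) T"
  have R5: "rooted (k + 5) = A @ B"
    by (simp add: rooted_rec A_def B_def)
  have R7: "rooted (k + 7) = map (add_mset (k + 6)) (A @ B) @ map (add_mset (k + 7)) (B @ C)"
    by (simp add: rooted_rec_7 R5 T B_def C_def)
  have above: "count w c = 0" if "w \<in> set (rooted m)" "m < c" for w c m
    using that var_le_of_mem_rooted[of w m c] by (auto simp: count_eq_zero_iff)
  have cnt_A: "count x (k + 6) = 0 \<and> count x (k + 5) = 0 \<and> count x (k + 4) = 1" if "x \<in> set A" for x
  proof -
    from that obtain w where "w \<in> set (rooted (k + 3))" "x = add_mset (k + 4) w"
      by (auto simp: A_def)
    with above[of w "k + 3"] show ?thesis by simp
  qed
  have cnt_B: "count x (k + 6) = 0 \<and> count x (k + 5) = 1 \<and> count x (k + 4) = 0" if "x \<in> set B" for x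
  proof -
    from that obtain w where "w \<in> set (rooted (k + 2))" "x = add_mset (k + 5) (add_mset (k + 3) w)"
      by (auto simp: B_def)
    with above[of w "k + 2"] show ?thesis by simp
  qed
  have cnt_C: "count x (k + 6) = 0 \<and> count x (k + 5) = 1 \<and> 1 \<le> count x (k + 4)" if "x \<in> set C" for x
  proof -
    from that obtain t where t: "t \<in> set T" "x = add_mset (k + 5) t"
      by (auto simp: C_def)
    with T have "t \<in> set (rooted (k + 4))"
      by simp
    with t T4 above[of t "k + 4"] show ?thesis by (simp add: Suc_le_eq)
  qed
  have "u \<in> set A" "v \<in> set B"
    using u v by (simp_all add: e A_def B_def)
  then have cnt_X: "count (u + v) (k + 6) = 0 \<and> count (u + v) (k + 5) = 1 \<and> count (u + v) (k + 4) = 1"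
    using cnt_A cnt_B by simp
  have neq: "x + y \<noteq> M" if "count x c + count y c \<noteq> count M c" for x y M :: monomial and c
    using that by auto
  have "factor_pairs (rooted (k + 7)) (add_mset (k + 6) (add_mset (k + 7) (u + v))) =
      (\<lambda>(i, j). (i, length (map (add_mset (k + 6)) (A @ B)) + j)) `
        cross_pairs (map (add_mset (k + 6)) (A @ B)) (map (add_mset (k + 7)) (B @ C))
          (add_mset (k + 6) (add_mset (k + 7) (u + v)))"
    unfolding R7
  proof (rule factor_pairs_append; intro ballI neq[where c = "k + 6"])
    fix x x' assume "x \<in> set (map (add_mset (k + 6)) (A @ B))" "x' \<in> set (map (add_mset (k + 6)) (A @ B))"
    with cnt_A cnt_B cnt_X show "count x (k + 6) + count x' (k + 6) \<noteq>
        count (add_mset (k + 6) (add_mset (k + 7) (u + v))) (k + 6)"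
      by auto
  next
    fix y y' assume "y \<in> set (map (add_mset (k + 7)) (B @ C))" "y' \<in> set (map (add_mset (k + 7)) (B @ C))"
    with cnt_B cnt_C cnt_X show "count y (k + 6) + count y' (k + 6) \<noteq>
        count (add_mset (k + 6) (add_mset (k + 7) (u + v))) (k + 6)"
      by auto
  qed
  also have "\<dots> = (\<lambda>(i, j). (i, length (A @ B) + j)) ` cross_pairs (A @ B) (B @ C) (u + v)"
    by (simp only: cross_pairs_map_add_mset length_map)
  also have "cross_pairs (A @ B) (B @ C) (u + v) = cross_pairs A B (u + v)"
  proof (rule cross_pairs_append; intro ballI)
    fix x y assume "x \<in> set B" "y \<in> set (B @ C)"
    with cnt_B[of x] cnt_B[of y] cnt_C[of y] cnt_X show "x + y \<noteq> u + v"
      by (intro neq[where c = "k + 5"]) (auto simp flip: count_greater_zero_iff)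
  next
    fix x y assume "x \<in> set A" "y \<in> set C"
    with cnt_A[of x] cnt_C[of y] cnt_X show "x + y \<noteq> u + v"
      by (intro neq[where c = "k + 4"]) auto
  qed
  also have "(\<lambda>(i, j). (i, length (A @ B) + j)) ` cross_pairs A B (u + v) =
      (\<lambda>(i, j). (i, j + length B)) ` (\<lambda>(i, j). (i, length A + j)) ` cross_pairs A B (u + v)"
    unfolding image_image by (rule image_cong) auto
  also have "(\<lambda>(i, j). (i, length A + j)) ` cross_pairs A B (u + v) = factor_pairs (rooted (k + 5)) (u + v)"
    unfolding R5
  proof (rule factor_pairs_append[symmetric]; intro ballI neq[where c = "k + 5"])
    fix x x' assume "x \<in> set A" "x' \<in> set A"
    with cnt_A cnt_X show "count x (k + 5) + count x' (k + 5) \<noteq> count (u + v) (k + 5)"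
      by auto
  next
    fix y y' assume "y \<in> set B" "y' \<in> set B"
    with cnt_B cnt_X show "count y (k + 5) + count y' (k + 5) \<noteq> count (u + v) (k + 5)"
      by auto
  qed
  finally show ?thesis
    unfolding e unfolding n by (simp add: B_def)
qed

theorem lemma3p13:
  fixes n :: nat and u u' v v' :: monomial
  assumes "n \<ge> 7"
    and "add_mset (n - 1) u \<in> set (A_list n)"
    and "add_mset (n - 1) u' \<in> set (A_list n)"
    and "add_mset n v \<in> set (C_list n)"
    and "add_mset n v' \<in> set (C_list n)"
    and "R_greater (n - 2) (u + v) (u' + v')"
  shows "R_greater n (add_mset (n - 1) (add_mset n (u + v)))
                     (add_mset (n - 1) (add_mset n (u' + v')))"
proof -
  define lift :: "nat \<times> nat \<Rightarrow> nat \<times> nat" where "lift = (\<lambda>(i, j). (i, j + length (rooted (n - 5))))"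
  have lift_less: "lift p < lift q" if "p < q" for p q
    using that by (cases p; cases q) (auto simp: lift_def less_prod_def)
  have "mono lift"
    by (auto simp: mono_def lift_def less_eq_prod_def)
  have lifted: "factor_pairs (rooted n) (add_mset (n - 1) (add_mset n (a + b))) =
      lift ` factor_pairs (rooted (n - 2)) (a + b)"
    and F2: "add_mset (n - 1) (add_mset n (a + b)) \<in> F2 n"
    if "add_mset (n - 1) a \<in> set (A_list n)" "add_mset n b \<in> set (C_list n)" for a b
  proof -
    show "factor_pairs (rooted n) (add_mset (n - 1) (add_mset n (a + b))) =
        lift ` factor_pairs (rooted (n - 2)) (a + b)"
      unfolding lift_def
      using factor_pairs_rooted_lift A_list_memD C_list_memD assms(1) that by blast
    have "add_mset (n - 1) a \<in> set (rooted n)" "add_mset n b \<in> set (rooted n)"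
      using that by (simp_all add: A_list_def C_list_def)
    moreover have "add_mset (n - 1) (add_mset n (a + b)) = add_mset (n - 1) a + add_mset n b"
      by simp
    ultimately show "add_mset (n - 1) (add_mset n (a + b)) \<in> F2 n"
      unfolding F2_def by blast
  qed
  have Min_lift: "Min (lift ` factor_pairs (rooted (n - 2)) M) = lift (Min (factor_pairs (rooted (n - 2)) M))"
    if "M \<in> F2 (n - 2)" for M
  proof -
    from that have "factor_pairs (rooted (n - 2)) M \<noteq> {}"
      by (auto simp: F2_def factor_pairs_nonempty)
    then show ?thesis
      by (rule mono_Min_commute[OF \<open>mono lift\<close> finite_factor_pairs, symmetric])
  qed
  from assms(6) have F2': "u + v \<in> F2 (n - 2)" "u' + v' \<in> F2 (n - 2)"
    and less: "Min (factor_pairs (rooted (n - 2)) (u + v)) < Min (factor_pairs (rooted (n - 2)) (u' + v'))"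
    by (simp_all add: R_greater_iff_Min_factor_pairs)
  show ?thesis
    unfolding R_greater_iff_Min_factor_pairs lifted[OF assms(2,4)] lifted[OF assms(3,5)]
      Min_lift[OF F2'(1)] Min_lift[OF F2'(2)]
    using F2[OF assms(2,4)] F2[OF assms(3,5)] lift_less[OF less] by blast
qed

end
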